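(* There exist positive integers $m_0,t,L,q_0$, depending only on $k$, such that for every $(m_0,t,L,q_0)$-pseudo-random weight $\nu=(\nu_N)$ there is a function $N\mapsto\varepsilon(N)\ge0$ on primes with $\varepsilon(N)\to0$, such that for every prime $N$ and every $f:\mathbb{Z}_N\to\mathbb{R}$ with $|f(x)|\le1+\nu_N(x)$ for all $x$, one has $\max_{x\in\mathbb{Z}_N}|\mathcal Df(x)|\le2^{2^k-1}+\varepsilon(N)$.
   Context: Let $k\ge 2$ be a fixed integer. For a prime $N$, $\mathbb{Z}_N=\mathbb{Z}/N\mathbb{Z}$. For a finite set $A$ and $g:A\to\mathbb{R}$, $\mathbb{E}(g\mid A)=\frac{1}{|A|}\sum_{a\in A}g(a)$. For $\boldsymbol\omega\in\{0,1\}^k$ and $\mathbf t\in\mathbb{Z}_N^k$, $\boldsymbol\omega\cdot\mathbf t=\sum_i\omega_it_i$; $\mathbf 0=(0,\dots,0)$. The dual function of $f$ is $\mathcal Df(x)=\mathbb{E}\bigl(\prod_{\boldsymbol\omega\in\{0,1\}^k,\ \boldsymbol\omega\ne\mathbf 0}f(x+\boldsymbol\omega\cdot\mathbf t)\mid\mathbf t\in\mathbb{Z}_N^k\bigr)$. Let $m_0,t,L,q_0$ be positive integers. An $(m_0,t,L,q_0)$-pseudo-random weight is a family $\nu=(\nu_N)_{N\text{ prime}}$ of functions $\nu_N:\mathbb{Z}_N\to[0,\infty)$ satisfying: (Linear forms condition) $\sup\bigl|\mathbb{E}\bigl(\prod_{i=1}^m\nu_N(\psi_i(\mathbf{x}))\mid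 \mathbf{x}\in\mathbb{Z}_N^t\bigr)-1\bigr|\to 0$ as $N\to\infty$, where the supremum is over all $m\le m_0$ and all maps $\psi_1,\dots,\psi_m:\mathbb{Z}_N^t\to\mathbb{Z}_N$ of the form $\psi_i(\mathbf{x})=b_i+\sum_{j=1}^tL_{i,j}x_j$ with $b_i\in\mathbb{Z}$ arbitrary, $L_{i,j}\in\mathbb{Z}$, $|L_{i,j}|\le L$, each vector $(L_{i,j})_{1\le j\le t}\in\mathbb{Z}^t$ nonzero, and no two of these vectors collinear; (Correlation condition) there exist functions $\tau_N:\mathbb{Z}_N\to[0,\infty)$ with $\sup_N\mathbb{E}(\tau_N^p\mid\mathbb{Z}_N)<\infty$ for every integer $p\ge1$, such that for every prime $N$, every integer $q$ with $2\le q\le q_0$ and all $h_1,\dots,h_q\in\mathbb{Z}_N$ (not necessarily distinct), $\mathbb{E}\bigl(\nu_N(x+h_1)\cdots\nu_N(x+h_q)\mid x\in\mathbb{Z}_N\bigr)\le\sum_{1\le i<j\le q}\tau_N(h_i-h_j)$. *)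

theory Defs
  imports "HOL-Analysis.Analysis" "HOL-Computational_Algebra.Primes"
begin

text \<open>Z_N is represented by {0..<N} (natural numbers) with arithmetic mod N.
  A vector omega in {0,1}^k is represented by its support S \<subseteq> {0..<k};
  omega \<noteq> 0 iff S \<noteq> {}, and omega . t = sum of t i over i in S.\<close>

definition ZNvec :: "nat \<Rightarrow> nat \<Rightarrow> (nat \<Rightarrow> nat) set" where
  "ZNvec N k = PiE {0..<k} (\<lambda>_. {0..<N})"

definition dual_fun :: "nat \<Rightarrow> nat \<Rightarrow> (nat \<Rightarrow> real) \<Rightarrow> nat \<Rightarrow> real" where
  "dual_fun k N f x =
     (\<Sum>t\<in>ZNvec N k. \<Prod>S\<in>Pow {0..<k} - {{}}. f ((x + (\<Sum>i\<in>S. t i)) mod N))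
       / real N ^ k"

definition collinear_vec :: "nat \<Rightarrow> (nat \<Rightarrow> int) \<Rightarrow> (nat \<Rightarrow> int) \<Rightarrow> bool" where
  "collinear_vec t u v \<longleftrightarrow>
     (\<exists>a b :: int. (a \<noteq> 0 \<or> b \<noteq> 0) \<and> (\<forall>j<t. a * u j = b * v j))"

definition lin_form :: "nat \<Rightarrow> nat \<Rightarrow> int \<Rightarrow> (nat \<Rightarrow> int) \<Rightarrow> (nat \<Rightarrow> nat) \<Rightarrow> nat" where
  "lin_form N t b Lm x = nat ((b + (\<Sum>j<t. Lm j * int (x j))) mod int N)"

definition linear_forms_condition ::
  "nat \<Rightarrow> nat \<Rightarrow> nat \<Rightarrow> (nat \<Rightarrow> nat \<Rightarrow> real) \<Rightarrow> bool" where
  "linear_forms_condition m0 t L \<nu> \<longleftrightarrow>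
     (\<forall>e>0. \<exists>N0. \<forall>N. prime N \<and> N \<ge> N0 \<longrightarrow>
        (\<forall>m (b :: nat \<Rightarrow> int) (Lm :: nat \<Rightarrow> nat \<Rightarrow> int).
           m \<le> m0 \<and>
           (\<forall>i<m. \<forall>j<t. \<bar>Lm i j\<bar> \<le> int L) \<and>
           (\<forall>i<m. \<exists>j<t. Lm i j \<noteq> 0) \<and>
           (\<forall>i<m. \<forall>i'<m. i \<noteq> i' \<longrightarrow> \<not> collinear_vec t (Lm i) (Lm i'))
           \<longrightarrow>
           \<bar>(\<Sum>x\<in>ZNvec N t. \<Prod>i<m. \<nu> N (lin_form N t (b i) (Lm i) x)) / real N ^ t - 1\<bar>
             \<le> e))"

definition correlation_condition ::
  "nat \<Rightarrow> (nat \<Rightarrow> nat \<Rightarrow> real) \<Rightarrow> bool" where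
  "correlation_condition q0 \<nu> \<longleftrightarrow>
     (\<exists>\<tau> :: nat \<Rightarrow> nat \<Rightarrow> real.
        (\<forall>N x. prime N \<and> x < N \<longrightarrow> \<tau> N x \<ge> 0) \<and>
        (\<forall>p::nat. p \<ge> 1 \<longrightarrow> (\<exists>C. \<forall>N. prime N \<longrightarrow>
            (\<Sum>x<N. \<tau> N x ^ p) / real N \<le> C)) \<and>
        (\<forall>N q (h :: nat \<Rightarrow> nat). prime N \<and> 2 \<le> q \<and> q \<le> q0 \<and> (\<forall>i<q. h i < N) \<longrightarrow>
            (\<Sum>x<N. \<Prod>i<q. \<nu> N ((x + h i) mod N)) / real N
              \<le> (\<Sum>(i, j)\<in>{(i, j). i < j \<and> j < q}.
                    \<tau> N (nat ((int (h i) - int (h j)) mod int N)))))"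

definition pseudo_random_weight ::
  "nat \<Rightarrow> nat \<Rightarrow> nat \<Rightarrow> nat \<Rightarrow> (nat \<Rightarrow> nat \<Rightarrow> real) \<Rightarrow> bool" where
  "pseudo_random_weight m0 t L q0 \<nu> \<longleftrightarrow>
     (\<forall>N x. prime N \<and> x < N \<longrightarrow> \<nu> N x \<ge> 0) \<and>
     linear_forms_condition m0 t L \<nu> \<and>
     correlation_condition q0 \<nu>"

end

theory Submission
  imports Defs
begin

text \<open>Bounding each factor of the product that defines the dual function by 1 + \<nu> and expanding,
  |Df(x)| is at most the sum, over the 2^(2^k-1) sets A of nonzero vertices of the cube, of the
  averages over t of the products of \<nu>(x + \<omega>\<cdot>t) for \<omega> in A. The forms t \<mapsto> x + \<omega>\<cdot>t have 0/1
  coefficients and are pairwise non-collinear, so by the linear forms condition each of these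
  averages tends to 1, uniformly in x and A.\<close>

definition cube_average :: "(nat \<Rightarrow> real) \<Rightarrow> nat \<Rightarrow> nat \<Rightarrow> nat \<Rightarrow> nat set set \<Rightarrow> real" where
  "cube_average w k N x A =
     (\<Sum>t\<in>ZNvec N k. \<Prod>S\<in>A. w ((x + (\<Sum>i\<in>S. t i)) mod N)) / real N ^ k"

lemma prod_one_plus_eq_sum_Pow:
  fixes g :: "'a \<Rightarrow> 'b::comm_semiring_1"
  assumes "finite P"
  shows "(\<Prod>S\<in>P. 1 + g S) = (\<Sum>A\<in>Pow P. \<Prod>S\<in>A. g S)"
  using prod_add[OF assms, of g "\<lambda>_. 1"] by (simp add: add.commute)

lemma abs_dual_fun_le_sum_cube_average:
  assumes f_bound: "\<forall>y<N. \<bar>f y\<bar> \<le> 1 + w y" and "N > 0"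
  shows "\<bar>dual_fun k N f x\<bar> \<le> (\<Sum>A\<in>Pow (Pow {0..<k} - {{}}). cube_average w k N x A)"
proof -
  let ?P = "Pow {0..<k} - {{}}"
  let ?y = "\<lambda>t S. (x + (\<Sum>i\<in>S. t i)) mod N"
  have "\<bar>\<Prod>S\<in>?P. f (?y t S)\<bar> \<le> (\<Prod>S\<in>?P. 1 + w (?y t S))" for t
    unfolding abs_prod using f_bound \<open>N > 0\<close> by (intro prod_mono) auto
  then have "\<bar>\<Sum>t\<in>ZNvec N k. \<Prod>S\<in>?P. f (?y t S)\<bar> \<le> (\<Sum>t\<in>ZNvec N k. \<Prod>S\<in>?P. 1 + w (?y t S))"
    by (intro order_trans[OF sum_abs] sum_mono)
  then have "\<bar>dual_fun k N f x\<bar> \<le> (\<Sum>t\<in>ZNvec N k. \<Prod>S\<in>?P. 1 + w (?y t S)) / real N ^ k"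
    unfolding dual_fun_def by (simp add: divide_right_mono)
  also have "\<dots> = (\<Sum>t\<in>ZNvec N k. \<Sum>A\<in>Pow ?P. \<Prod>S\<in>A. w (?y t S)) / real N ^ k"
    by (simp add: prod_one_plus_eq_sum_Pow)
  also have "\<dots> = (\<Sum>A\<in>Pow ?P. cube_average w k N x A)"
    unfolding cube_average_def by (simp add: sum.swap[of _ "ZNvec N k"] sum_divide_distrib)
  finally show ?thesis .
qed

lemma collinear_vec_indicator_imp_eq:
  assumes "S \<subseteq> {..<t}" "T \<subseteq> {..<t}" "S \<noteq> {}" "T \<noteq> {}"
    and "collinear_vec t (indicator S) (indicator T)"
  shows "S = T"
proof -
  obtain a b :: int where nontrivial: "a \<noteq> 0 \<or> b \<noteq> 0"
    and eq: "\<forall>j<t. a * indicator S j = b * indicator T j"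
    using assms(5) unfolding collinear_vec_def by blast
  have on_S: "a = b * indicator T j" if "j \<in> S" for j
    using eq that assms(1) by fastforce
  have on_T: "a * indicator S j = b" if "j \<in> T" for j
    using eq that assms(2) by fastforce
  have "a \<noteq> 0 \<longleftrightarrow> b \<noteq> 0"
    using on_S on_T assms(3,4) by (metis ex_in_conv mult_zero_left)
  with nontrivial have "a \<noteq> 0" "b \<noteq> 0"
    by auto
  then show ?thesis
    using on_S on_T
    by (metis (full_types) subset_antisym subsetI mult_zero_right of_bool_eq(1) indicator_def)
qed

lemma lin_form_indicator:
  assumes "S \<subseteq> {..<t}"
  shows "lin_form N t (int x) (indicator S) y = (x + (\<Sum>i\<in>S. y i)) mod N"
proof -
  have "(\<Sum>j<t. indicator S j * int (y j)) = (\<Sum>j\<in>S. int (y j))"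
    using assms by (simp add: indicator_def sum.If_cases Int_absorb1)
  then show ?thesis
    unfolding lin_form_def by (metis nat_int of_nat_add of_nat_mod of_nat_sum)
qed

lemma linear_forms_condition_imp_cube_average:
  assumes lf: "linear_forms_condition m0 k L \<nu>" and "L \<ge> 1" and "e > 0"
  shows "\<exists>N0. \<forall>N. prime N \<and> N \<ge> N0 \<longrightarrow> (\<forall>x A. A \<subseteq> Pow {0..<k} - {{}} \<longrightarrow> card A \<le> m0 \<longrightarrow>
           \<bar>cube_average (\<nu> N) k N x A - 1\<bar> \<le> e)"
proof -
  obtain N0 where N0: "\<forall>N. prime N \<and> N \<ge> N0 \<longrightarrow>
        (\<forall>m (b :: nat \<Rightarrow> int) (Lm :: nat \<Rightarrow> nat \<Rightarrow> int).
           m \<le> m0 \<and> (\<forall>i<m. \<forall>j<k. \<bar>Lm i j\<bar> \<le> int L) \<and> (\<forall>i<m. \<exists>j<k. Lm i j \<noteq> 0) \<and>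
           (\<forall>i<m. \<forall>i'<m. i \<noteq> i' \<longrightarrow> \<not> collinear_vec k (Lm i) (Lm i')) \<longrightarrow>
           \<bar>(\<Sum>x\<in>ZNvec N k. \<Prod>i<m. \<nu> N (lin_form N k (b i) (Lm i) x)) / real N ^ k - 1\<bar> \<le> e)"
    using lf \<open>e > 0\<close> unfolding linear_forms_condition_def by blast
  have "\<bar>cube_average (\<nu> N) k N x A - 1\<bar> \<le> e"
    if N: "prime N" "N \<ge> N0" and A: "A \<subseteq> Pow {0..<k} - {{}}" "card A \<le> m0" for N x A
  proof -
    have "finite A"
      using A(1) by (simp add: finite_subset)
    then obtain g where g: "bij_betw g {..<card A} A"
      using ex_bij_betw_nat_finite by (metis atLeast0LessThan)
    have g_sub: "g i \<subseteq> {..<k}" and g_ne: "g i \<noteq> {}" if "i < card A" for i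
      using bij_betwE[OF g] A(1) that by (fastforce simp: atLeast0LessThan)+
    have "\<bar>(\<Sum>t\<in>ZNvec N k. \<Prod>i<card A. \<nu> N (lin_form N k (int x) (indicator (g i)) t)) / real N ^ k - 1\<bar>
          \<le> e"
    proof (rule N0[rule_format]; (intro conjI allI impI)?)
      show "\<exists>j<k. indicator (g i) j \<noteq> (0::int)" if "i < card A" for i
        using g_sub[OF that] g_ne[OF that] by (auto simp: indicator_def)
      show "\<not> collinear_vec k (indicator (g i)) (indicator (g i'))"
        if "i < card A" "i' < card A" "i \<noteq> i'" for i i'
        using collinear_vec_indicator_imp_eq g_sub g_ne that bij_betw_imp_inj_on[OF g]
        by (metis inj_on_eq_iff lessThan_iff)
    qed (use N A \<open>L \<ge> 1\<close> in \<open>auto simp: indicator_def\<close>)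
    moreover have "(\<Prod>i<card A. \<nu> N (lin_form N k (int x) (indicator (g i)) t))
        = (\<Prod>S\<in>A. \<nu> N ((x + (\<Sum>i\<in>S. t i)) mod N))" for t
      using prod.reindex_bij_betw[OF g] g_sub by (simp add: lin_form_indicator)
    ultimately show ?thesis
      unfolding cube_average_def by simp
  qed
  then show ?thesis by blast
qed

definition cube_average_error :: "(nat \<Rightarrow> real) \<Rightarrow> nat \<Rightarrow> nat \<Rightarrow> real" where
  "cube_average_error w k N =
     Max ((\<lambda>x. \<Sum>A\<in>Pow (Pow {0..<k} - {{}}). \<bar>cube_average w k N x A - 1\<bar>) ` {..<N})"

lemma card_nonzero_cube_vertices: "card (Pow {0..<k::nat} - {{}}) = 2 ^ k - 1"
  by (simp add: card_Pow)

lemma cube_average_error_nonneg: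
  assumes "N > 0"
  shows "cube_average_error w k N \<ge> 0"
proof -
  have "0 \<le> (\<Sum>A\<in>Pow (Pow {0..<k} - {{}}). \<bar>cube_average w k N 0 A - 1\<bar>)"
    by (simp add: sum_nonneg)
  also have "\<dots> \<le> cube_average_error w k N"
    unfolding cube_average_error_def using assms by (intro Max_ge) auto
  finally show ?thesis .
qed

lemma abs_dual_fun_le_cube_average_error:
  assumes f_bound: "\<forall>y<N. \<bar>f y\<bar> \<le> 1 + w y" and "x < N"
  shows "\<bar>dual_fun k N f x\<bar> \<le> 2 ^ (2 ^ k - 1) + cube_average_error w k N"
proof -
  let ?Q = "Pow (Pow {0..<k} - {{}})"
  have "\<bar>dual_fun k N f x\<bar> \<le> (\<Sum>A\<in>?Q. cube_average w k N x A)"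
    using abs_dual_fun_le_sum_cube_average[OF f_bound] \<open>x < N\<close> by simp
  also have "\<dots> \<le> (\<Sum>A\<in>?Q. 1 + \<bar>cube_average w k N x A - 1\<bar>)"
    by (intro sum_mono) linarith
  also have "\<dots> = 2 ^ (2 ^ k - 1) + (\<Sum>A\<in>?Q. \<bar>cube_average w k N x A - 1\<bar>)"
    by (simp add: sum.distrib card_Pow card_nonzero_cube_vertices)
  also have "\<dots> \<le> 2 ^ (2 ^ k - 1) + cube_average_error w k N"
    unfolding cube_average_error_def using \<open>x < N\<close> by simp
  finally show ?thesis .
qed

lemma cube_average_error_tendsto_zero:
  assumes lf: "linear_forms_condition m0 k L \<nu>" and "2 ^ k - 1 \<le> m0" "L \<ge> 1" "e > 0"
  shows "\<exists>N0. \<forall>N. prime N \<and> N \<ge> N0 \<longrightarrow> cube_average_error (\<nu> N) k N < e"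
proof -
  let ?Q = "Pow (Pow {0..<k} - {{}})"
  define e' where "e' = e / (2 * card ?Q)"
  have "e' > 0"
    unfolding e'_def using \<open>e > 0\<close> by (simp add: card_Pow)
  then obtain N0 where N0: "\<forall>N. prime N \<and> N \<ge> N0 \<longrightarrow> (\<forall>x A. A \<in> ?Q \<longrightarrow> card A \<le> m0 \<longrightarrow>
      \<bar>cube_average (\<nu> N) k N x A - 1\<bar> \<le> e')"
    using linear_forms_condition_imp_cube_average[OF lf \<open>L \<ge> 1\<close>] by blast
  have "cube_average_error (\<nu> N) k N < e" if N: "prime N" "N \<ge> N0" for N
  proof -
    have "card A \<le> m0" if "A \<in> ?Q" for A
      using that \<open>2 ^ k - 1 \<le> m0\<close> card_mono[of "Pow {0..<k} - {{}}" A]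
      by (auto simp: card_nonzero_cube_vertices)
    then have "(\<Sum>A\<in>?Q. \<bar>cube_average (\<nu> N) k N x A - 1\<bar>) \<le> e / 2" for x
      using N0 N \<open>e > 0\<close> sum_bounded_above[of ?Q "\<lambda>A. \<bar>cube_average (\<nu> N) k N x A - 1\<bar>" e']
      by (simp add: e'_def card_Pow)
    then have "cube_average_error (\<nu> N) k N \<le> e / 2"
      unfolding cube_average_error_def using prime_gt_0_nat[OF N(1)] by (intro Max.boundedI) auto
    with \<open>e > 0\<close> show ?thesis by linarith
  qed
  then show ?thesis by blast
qed

theorem lemma4p2:
  fixes k :: nat
  assumes "k \<ge> 2"
  shows "\<exists>m0 t L q0 :: nat. m0 > 0 \<and> t > 0 \<and> L > 0 \<and> q0 > 0 \<and>
    (\<forall>\<nu>. pseudo_random_weight m0 t L q0 \<nu> \<longrightarrow>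
      (\<exists>\<epsilon> :: nat \<Rightarrow> real.
         (\<forall>N. prime N \<longrightarrow> \<epsilon> N \<ge> 0) \<and>
         (\<forall>e>0. \<exists>N0. \<forall>N. prime N \<and> N \<ge> N0 \<longrightarrow> \<epsilon> N < e) \<and>
         (\<forall>N (f :: nat \<Rightarrow> real). prime N \<longrightarrow> (\<forall>x<N. \<bar>f x\<bar> \<le> 1 + \<nu> N x) \<longrightarrow>
            (\<forall>x<N. \<bar>dual_fun k N f x\<bar> \<le> 2 ^ (2 ^ k - 1) + \<epsilon> N))))"
proof (rule exI[of _ "2 ^ k - 1"], rule exI[of _ k], rule exI[of _ 1], rule exI[of _ 1],
    intro conjI allI impI)
  show "0 < (2::nat) ^ k - 1" "0 < k"
    using assms one_less_power[of "2::nat" k] by simp_all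
  fix \<nu> assume "pseudo_random_weight (2 ^ k - 1) k 1 1 \<nu>"
  then have lf: "linear_forms_condition (2 ^ k - 1) k 1 \<nu>"
    unfolding pseudo_random_weight_def by blast
  show "\<exists>\<epsilon>. (\<forall>N. prime N \<longrightarrow> \<epsilon> N \<ge> 0) \<and>
         (\<forall>e>0. \<exists>N0. \<forall>N. prime N \<and> N \<ge> N0 \<longrightarrow> \<epsilon> N < e) \<and>
         (\<forall>N (f :: nat \<Rightarrow> real). prime N \<longrightarrow> (\<forall>x<N. \<bar>f x\<bar> \<le> 1 + \<nu> N x) \<longrightarrow>
            (\<forall>x<N. \<bar>dual_fun k N f x\<bar> \<le> 2 ^ (2 ^ k - 1) + \<epsilon> N))"
    using cube_average_error_nonneg prime_gt_0_nat abs_dual_fun_le_cube_average_error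
      cube_average_error_tendsto_zero[OF lf]
    by (intro exI[of _ "\<lambda>N. cube_average_error (\<nu> N) k N"]) auto
qed simp_all

end
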